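(* Let $k\ge 2$, $m\in\{1,\dots,k-1\}$ and $\alpha\in(0,1)$. Let $\theta_1\ge\theta_2\ge\dots\ge\theta_k$ be real parameters, and let $(\hat{\mathcal S}_T)_{T\ge 0}$ be the sequence of sets produced by the Sequential Correct Screening (SCS) procedure described in the context, built from confidence processes $L_{iT}(\cdot),U_{iT}(\cdot)$ satisfying the time-uniform guarantee ( * ) and $L_{iT}(\beta)\le U_{iT}(\beta)$. Then: (a) $\mathbb P\big(\forall T\in\mathbb N:\ \hat{\mathcal S}_T\subseteq \hat{\mathcal S}_{T-1}\big)=1$. (b) If $\theta_m>\theta_{m+1}$ (so that $\mathcal S=\{1,\dots,m\}$), then $\mathbb P\big(\forall T\in\mathbb N:\ \mathcal S\subseteq\hat{\mathcal S}_T\big)\ge 1-\alpha$. (c) If $\theta_m>\theta_{m+1}$ and, in addition, for every $i\in[k]$ and every $\beta\in(0,1)$ we have $U_{iT}(\beta)\to\theta_i$ and $L_{iT}(\beta)\to\theta_i$ in probability as $T\to\infty$, then $\mathbb P\big(\exists T_0\in\mathbb N\ \forall T\ge T_0:\ \hat{\mathcal S}_T=\mathcal S\big)\ge 1-\alpha$.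
   Context: Setting: $(\Omega,\mathcal F,\mathbb P)$ is a probability space with a filtration $(\mathcal F_T)_{T\in\mathbb N}$, $\mathbb N=\{1,2,\dots\}$, and $[k]=\{1,\dots,k\}$. The $m$-promising set is $\mathcal S=\{i\in[k]:\theta_i\ge\theta_m\}$. For each $i\in[k]$ and each $\beta\in(0,1)$, we are given two $(\mathcal F_T)$-adapted processes $(L_{iT}(\beta))_{T\in\mathbb N}$ and $(U_{iT}(\beta))_{T\in\mathbb N}$ with values in $[-\infty,\infty]$, such that $L_{iT}(\beta)\le U_{iT}(\beta)$ for all $T$, and satisfying the time-uniform guarantee ( * ) $\mathbb P(\exists T\in\mathbb N:\theta_i\le L_{iT}(\beta))\le\beta$ and $\mathbb P(\exists T\in\mathbb N:\theta_i\ge U_{iT}(\beta))\le\beta$. No assumption is made on the dependence between the processes for different $i$. SCS procedure: set $\alpha_{km}=\alpha/\{2m(k-m)\}$ and $\hat{\mathcal S}_0=[k]$. For $T\in\mathbb N$, let $L^{(m)}_T(\alpha_{km})$ be the $m$-th largest value (counting multiplicity) among $\{L_{iT}(\alpha_{km}):i\in\hat{\mathcal S}_{T-1}\}$, and set $\hat{\mathcal S}_T=\hat{\mathcal S}_{T-1}\setminus\{i\in\hat{\mathcal S}_{T-1}:U_{iT}(\alpha_{km})<L^{(m)}_T(\alpha_{km})\}$. (Under $L\le U$, this keeps $|\hat{\mathcal S}_T|\ge m$ for all $T$, so the $m$-th largest value is always defined.) *)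

theory Defs
  imports "HOL-Probability.Probability"
begin

definition mth_largest :: "nat \<Rightarrow> nat set \<Rightarrow> (nat \<Rightarrow> ereal) \<Rightarrow> ereal" where
  "mth_largest m A f = rev (sort (map f (sorted_list_of_set A))) ! (m - 1)"

definition alpha_km :: "real \<Rightarrow> nat \<Rightarrow> nat \<Rightarrow> real" where
  "alpha_km \<alpha> k m = \<alpha> / (2 * real m * (real k - real m))"

text \<open>SCS procedure.  L i beta T omega is the lower confidence process L_{iT}(beta) at omega,
  U likewise; time T ranges over 1,2,...; scs ... 0 is the initial set [k] = {1..k}.\<close>
fun scs :: "(nat \<Rightarrow> real \<Rightarrow> nat \<Rightarrow> 'a \<Rightarrow> ereal) \<Rightarrow> (nat \<Rightarrow> real \<Rightarrow> nat \<Rightarrow> 'a \<Rightarrow> ereal)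
            \<Rightarrow> real \<Rightarrow> nat \<Rightarrow> nat \<Rightarrow> 'a \<Rightarrow> nat \<Rightarrow> nat set" where
  "scs L U \<alpha> k m \<omega> 0 = {1..k}"
| "scs L U \<alpha> k m \<omega> (Suc T) =
     (let S = scs L U \<alpha> k m \<omega> T;
          a = alpha_km \<alpha> k m;
          l = mth_largest m S (\<lambda>i. L i a (Suc T) \<omega>)
      in S - {i \<in> S. U i a (Suc T) \<omega> < l})"

definition promising :: "(nat \<Rightarrow> real) \<Rightarrow> nat \<Rightarrow> nat \<Rightarrow> nat set" where
  "promising \<theta> k m = {i \<in> {1..k}. \<theta> i \<ge> \<theta> m}"

end

theory Submission
  imports Defs
begin

text \<open>
  Call an outcome good if no confidence sequence ever lies on the wrong side of its target:
  \<open>U\<^sub>i\<close> stays above \<open>\<theta>\<^sub>i\<close> for the top arms \<open>i \<le> m\<close> and \<open>L\<^sub>j\<close> stays below \<open>\<theta>\<^sub>j\<close>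
  for the others. These are \<open>k\<close> one-sided failures of probability at most \<open>\<alpha>\<^sub>k\<^sub>m\<close> each, and
  \<open>k \<alpha>\<^sub>k\<^sub>m \<le> \<alpha>\<close>, so the good event has probability at least \<open>1 - \<alpha>\<close>.
  An arm is eliminated only when \<open>m\<close> arms beat it (\<open>U\<^sub>i < L\<^sub>j\<close>). On the good event a top
  arm \<open>i\<close> can only be beaten by the other \<open>m - 1\<close> top arms, because
  \<open>L\<^sub>j < \<theta>\<^sub>j \<le> \<theta>\<^sub>m \<le> \<theta>\<^sub>i < U\<^sub>i\<close> for \<open>j > m\<close>; so the top arms are never eliminated.
  If moreover all bounds converge in probability, then at each time, with probability
  tending to one, all bounds are within a third of the gap \<open>\<theta>\<^sub>m - \<theta>\<^sub>m\<^sub>+\<^sub>1\<close> of their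
  targets, and then all \<open>m\<close> top arms beat a given \<open>j > m\<close>, which is eliminated. Hence the
  part of the good event on which some \<open>j > m\<close> survives forever is null, and elsewhere on
  the good event the decreasing screened sets eventually equal \<open>{1..m}\<close>.
\<close>

lemma sorted_less_nth_iff:
  fixes s :: "'b::linorder list"
  assumes s: "sorted s" and m: "1 \<le> m" "m \<le> length s"
  shows "x < s ! (length s - m) \<longleftrightarrow> m \<le> length (filter ((<) x) s)"
proof -
  define n where "n = length s"
  have len: "length (filter ((<) x) s) = card {p. p < n \<and> x < s ! p}"
    unfolding n_def by (rule length_filter_conv_card)
  show ?thesis
  proof
    assume "x < s ! (length s - m)"
    then have "{n - m..<n} \<subseteq> {p. p < n \<and> x < s ! p}"
      using s by (auto simp: n_def intro: less_le_trans[OF _ sorted_nth_mono])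
    then have "card {n - m..<n} \<le> card {p. p < n \<and> x < s ! p}"
      by (intro card_mono) auto
    then show "m \<le> length (filter ((<) x) s)"
      using m len by (simp add: n_def)
  next
    assume card: "m \<le> length (filter ((<) x) s)"
    show "x < s ! (length s - m)"
    proof (rule ccontr)
      assume "\<not> x < s ! (length s - m)"
      then have "{p. p < n \<and> x < s ! p} \<subseteq> {Suc (n - m)..<n}"
        using s m by (auto simp: n_def not_less not_less_eq_eq dest: sorted_nth_mono)
      then have "card {p. p < n \<and> x < s ! p} \<le> m - 1"
        using card_mono[of "{Suc (n - m)..<n}"] m by (fastforce simp: n_def)
      then show False
        using card len m by linarith
    qed
  qed
qed

lemma sorted_card_ge_nth:
  fixes s :: "'b::linorder list"
  assumes s: "sorted s" and m: "m \<le> length s"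
  shows "m \<le> length (filter ((\<le>) (s ! (length s - m))) s)"
proof -
  define n where "n = length s"
  have "{n - m..<n} \<subseteq> {p. p < n \<and> s ! (n - m) \<le> s ! p}"
    using s by (auto simp: n_def intro: sorted_nth_mono)
  then have "card {n - m..<n} \<le> card {p. p < n \<and> s ! (n - m) \<le> s ! p}"
    by (intro card_mono) auto
  then show ?thesis
    using m by (simp add: n_def length_filter_conv_card)
qed

lemma mth_largest_eq_nth_sort:
  assumes "finite A" "1 \<le> m" "m \<le> card A"
  shows "mth_largest m A f = sort (map f (sorted_list_of_set A)) ! (card A - m)"
  using assms unfolding mth_largest_def by (simp add: rev_nth Suc_diff_le)

lemma card_Collect_eq_length_filter_sort:
  assumes "finite A"
  shows "card {j \<in> A. P (f j)} = length (filter P (sort (map f (sorted_list_of_set A))))"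
proof -
  have "card {j \<in> A. P (f j)} = length (filter (P \<circ> f) (sorted_list_of_set A))"
    using assms by (subst distinct_length_filter) (auto intro: arg_cong[where f = card])
  also have "\<dots> = length (filter P (sort (map f (sorted_list_of_set A))))"
    by (metis filter_map length_map mset_filter mset_sort size_mset)
  finally show ?thesis .
qed

lemma less_mth_largest_iff:
  assumes "finite A" "1 \<le> m" "m \<le> card A"
  shows "x < mth_largest m A f \<longleftrightarrow> m \<le> card {j \<in> A. x < f j}"
  using sorted_less_nth_iff[of "sort (map f (sorted_list_of_set A))" m x] assms
  by (simp add: mth_largest_eq_nth_sort card_Collect_eq_length_filter_sort)

lemma card_ge_mth_largest:
  assumes "finite A" "1 \<le> m" "m \<le> card A"
  shows "m \<le> card {j \<in> A. mth_largest m A f \<le> f j}"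
  using sorted_card_ge_nth[of "sort (map f (sorted_list_of_set A))" m] assms
  by (simp add: mth_largest_eq_nth_sort card_Collect_eq_length_filter_sort)

lemma scs_subset: "scs L U \<alpha> k m \<omega> T \<subseteq> {1..k}"
  by (induction T) (auto simp: Let_def)

lemma finite_scs: "finite (scs L U \<alpha> k m \<omega> T)"
  by (rule finite_subset[OF scs_subset]) simp

lemma scs_antimono: "T \<le> T' \<Longrightarrow> scs L U \<alpha> k m \<omega> T' \<subseteq> scs L U \<alpha> k m \<omega> T"
  by (rule lift_Suc_antimono_le[of "scs L U \<alpha> k m \<omega>"]) (auto simp: Let_def)

lemma card_scs_ge:
  assumes LU: "\<And>i T. i \<in> {1..k} \<Longrightarrow> 1 \<le> T \<Longrightarrow>
                 L i (alpha_km \<alpha> k m) T \<omega> \<le> U i (alpha_km \<alpha> k m) T \<omega>"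
    and m: "1 \<le> m" "m \<le> k"
  shows "m \<le> card (scs L U \<alpha> k m \<omega> T)"
proof (induction T)
  case 0
  then show ?case using m by simp
next
  case (Suc T)
  let ?S = "scs L U \<alpha> k m \<omega> T" and ?L = "\<lambda>j. L j (alpha_km \<alpha> k m) (Suc T) \<omega>"
  have kept: "{j \<in> ?S. mth_largest m ?S ?L \<le> ?L j} \<subseteq> scs L U \<alpha> k m \<omega> (Suc T)"
  proof
    fix j assume j: "j \<in> {j \<in> ?S. mth_largest m ?S ?L \<le> ?L j}"
    then have "j \<in> {1..k}"
      using j scs_subset[of L U \<alpha> k m \<omega> T] by blast
    then have "mth_largest m ?S ?L \<le> U j (alpha_km \<alpha> k m) (Suc T) \<omega>"
      using j LU[of j "Suc T"] by (auto intro: order.trans)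
    then show "j \<in> scs L U \<alpha> k m \<omega> (Suc T)"
      using j by (simp add: Let_def not_less)
  qed
  have "m \<le> card {j \<in> ?S. mth_largest m ?S ?L \<le> ?L j}"
    using card_ge_mth_largest[OF finite_scs m(1) Suc] .
  also have "\<dots> \<le> card (scs L U \<alpha> k m \<omega> (Suc T))"
    by (rule card_mono[OF finite_scs kept])
  finally show ?case .
qed

lemma mem_scs_Suc_iff:
  assumes LU: "\<And>i T. i \<in> {1..k} \<Longrightarrow> 1 \<le> T \<Longrightarrow>
                 L i (alpha_km \<alpha> k m) T \<omega> \<le> U i (alpha_km \<alpha> k m) T \<omega>"
    and m: "1 \<le> m" "m \<le> k"
  shows "i \<in> scs L U \<alpha> k m \<omega> (Suc T) \<longleftrightarrow> i \<in> scs L U \<alpha> k m \<omega> T \<and>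
           card {j \<in> scs L U \<alpha> k m \<omega> T.
             U i (alpha_km \<alpha> k m) (Suc T) \<omega> < L j (alpha_km \<alpha> k m) (Suc T) \<omega>} < m"
  using less_mth_largest_iff[OF finite_scs m(1) card_scs_ge[where L = L and U = U, OF LU m]]
  by (auto simp: Let_def not_le)

lemma top_subset_scs:
  assumes LU: "\<And>i T. i \<in> {1..k} \<Longrightarrow> 1 \<le> T \<Longrightarrow>
                 L i (alpha_km \<alpha> k m) T \<omega> \<le> U i (alpha_km \<alpha> k m) T \<omega>"
    and m: "1 \<le> m" "m \<le> k"
    and U_top: "\<And>i T. i \<in> {1..m} \<Longrightarrow> 1 \<le> T \<Longrightarrow> c \<le> U i (alpha_km \<alpha> k m) T \<omega>"
    and L_rest: "\<And>j T. j \<in> {m<..k} \<Longrightarrow> 1 \<le> T \<Longrightarrow> L j (alpha_km \<alpha> k m) T \<omega> \<le> c"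
  shows "{1..m} \<subseteq> scs L U \<alpha> k m \<omega> T"
proof (induction T)
  case 0
  then show ?case using m by simp
next
  case (Suc T)
  have T: "1 \<le> Suc T" by simp
  show ?case
  proof
    fix i assume i: "i \<in> {1..m}"
    let ?J = "{j \<in> scs L U \<alpha> k m \<omega> T.
                U i (alpha_km \<alpha> k m) (Suc T) \<omega> < L j (alpha_km \<alpha> k m) (Suc T) \<omega>}"
    have "?J \<subseteq> {1..m} - {i}"
    proof
      fix j assume "j \<in> ?J"
      then have j: "j \<in> {1..k}" and less: "U i (alpha_km \<alpha> k m) (Suc T) \<omega> < L j (alpha_km \<alpha> k m) (Suc T) \<omega>"
        using scs_subset[of L U \<alpha> k m \<omega> T] by blast+
      have "j \<notin> {m<..k}"
        using less order.trans[OF L_rest U_top[OF i T], of j] T by (auto simp: not_less[symmetric])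
      moreover have "j \<noteq> i"
        using less LU[OF _ T, of i] i m by auto
      ultimately show "j \<in> {1..m} - {i}"
        using j by auto
    qed
    then have "card ?J \<le> m - 1"
      using card_mono[of "{1..m} - {i}" ?J] i by simp
    then have "card ?J < m"
      using m by linarith
    then show "i \<in> scs L U \<alpha> k m \<omega> (Suc T)"
      using Suc i mem_scs_Suc_iff[where L = L and U = U, OF LU m] by blast
  qed
qed

lemma not_mem_scs_Suc_if_dominated:
  assumes LU: "\<And>i T. i \<in> {1..k} \<Longrightarrow> 1 \<le> T \<Longrightarrow>
                 L i (alpha_km \<alpha> k m) T \<omega> \<le> U i (alpha_km \<alpha> k m) T \<omega>"
    and m: "1 \<le> m" "m \<le> k"
    and A: "A \<subseteq> scs L U \<alpha> k m \<omega> T" "m \<le> card A"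
    and dominated: "\<And>i. i \<in> A \<Longrightarrow> U j (alpha_km \<alpha> k m) (Suc T) \<omega> < L i (alpha_km \<alpha> k m) (Suc T) \<omega>"
  shows "j \<notin> scs L U \<alpha> k m \<omega> (Suc T)"
proof -
  have "A \<subseteq> {i \<in> scs L U \<alpha> k m \<omega> T.
          U j (alpha_km \<alpha> k m) (Suc T) \<omega> < L i (alpha_km \<alpha> k m) (Suc T) \<omega>}"
    (is "_ \<subseteq> ?J") using A dominated by blast
  then have "card A \<le> card ?J"
    by (intro card_mono) (simp add: finite_scs)
  then have "\<not> card ?J < m"
    using A(2) by linarith
  then show ?thesis
    using mem_scs_Suc_iff[where L = L and U = U and i = j and T = T, OF LU m] by blast
qed

lemma scs_eventually_eq:
  assumes kept: "\<And>T. A \<subseteq> scs L U \<alpha> k m \<omega> T"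
    and dropped: "\<And>j. j \<in> {1..k} - A \<Longrightarrow> \<exists>T. j \<notin> scs L U \<alpha> k m \<omega> T"
  shows "\<exists>T0\<ge>1. \<forall>T\<ge>T0. scs L U \<alpha> k m \<omega> T = A"
proof -
  have "\<forall>\<^sub>F T in sequentially. j \<notin> scs L U \<alpha> k m \<omega> T" if j: "j \<in> {1..k} - A" for j
  proof -
    obtain T1 where "j \<notin> scs L U \<alpha> k m \<omega> T1"
      using dropped[OF j] by blast
    then show ?thesis
      unfolding eventually_sequentially
      using scs_antimono[where L = L and U = U and \<alpha> = \<alpha> and k = k and m = m and \<omega> = \<omega> and T = T1]
      by blast
  qed
  then have "\<forall>\<^sub>F T in sequentially. \<forall>j \<in> {1..k} - A. j \<notin> scs L U \<alpha> k m \<omega> T"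
    by (simp add: eventually_ball_finite)
  then obtain T0 where T0: "\<And>T. T \<ge> T0 \<Longrightarrow> \<forall>j \<in> {1..k} - A. j \<notin> scs L U \<alpha> k m \<omega> T"
    unfolding eventually_sequentially by blast
  have "scs L U \<alpha> k m \<omega> T = A" if "T \<ge> Suc T0" for T
    using kept[of T] T0[of T] that scs_subset[of L U \<alpha> k m \<omega> T] by auto
  then show ?thesis
    by (intro exI[of _ "Suc T0"]) auto
qed

lemma measurable_Collect_finite:
  assumes "finite I" and P: "\<And>x. x \<in> I \<Longrightarrow> Measurable.pred M (P x)"
  shows "(\<lambda>\<omega>. {x \<in> I. P x \<omega>}) \<in> M \<rightarrow>\<^sub>M count_space (Pow I)"
  unfolding measurable_count_space_eq2[OF finite_Pow_iff[THEN iffD2, OF \<open>finite I\<close>]]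
proof (intro conjI ballI)
  fix a assume "a \<in> Pow I"
  then have "(\<lambda>\<omega>. {x \<in> I. P x \<omega>}) -` {a} \<inter> space M = {\<omega> \<in> space M. \<forall>x\<in>I. x \<in> a \<longleftrightarrow> P x \<omega>}"
    by auto
  also have "\<dots> \<in> sets M"
    using \<open>finite I\<close> unfolding pred_def[symmetric]
    by (intro pred_intros_finite(3) pred_intros_logic(6) measurable_const P) auto
  finally show "(\<lambda>\<omega>. {x \<in> I. P x \<omega>}) -` {a} \<inter> space M \<in> sets M" .
qed auto

lemma alpha_km_pos: "0 < \<alpha> \<Longrightarrow> 1 \<le> m \<Longrightarrow> m < k \<Longrightarrow> 0 < alpha_km \<alpha> k m"
  by (simp add: alpha_km_def)

lemma of_nat_mult_alpha_km_le:
  assumes "0 \<le> \<alpha>" "1 \<le> m" "m < k"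
  shows "real k * alpha_km \<alpha> k m \<le> \<alpha>"
proof -
  have "real m \<le> real m * (real k - real m)" "real k - real m \<le> real m * (real k - real m)"
    using assms(2,3) by (simp_all add: mult_le_cancel_left1 mult_le_cancel_right1)
  then have "real k \<le> 2 * real m * (real k - real m)"
    by simp
  then have "real k / (2 * real m * (real k - real m)) \<le> 1"
    using assms(2,3) by (simp add: divide_le_eq)
  then have "\<alpha> * (real k / (2 * real m * (real k - real m))) \<le> \<alpha>"
    using assms(1) mult_left_mono by fastforce
  then show ?thesis
    by (simp add: alpha_km_def mult.commute)
qed

lemma alpha_km_less_one:
  assumes "0 < \<alpha>" "\<alpha> < 1" "1 \<le> m" "m < k"
  shows "alpha_km \<alpha> k m < 1"
proof -
  have "alpha_km \<alpha> k m \<le> real k * alpha_km \<alpha> k m"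
    using alpha_km_pos[OF assms(1,3,4)] assms(4) by (simp add: mult_le_cancel_right1)
  also have "\<dots> \<le> \<alpha>"
    using assms by (intro of_nat_mult_alpha_km_le) auto
  finally show ?thesis
    using assms(2) by linarith
qed

lemma promising_eq_top:
  assumes antimono: "\<And>i j. 1 \<le> i \<Longrightarrow> i \<le> j \<Longrightarrow> j \<le> k \<Longrightarrow> \<theta> j \<le> \<theta> i"
    and "m < k" and gap: "\<theta> (m + 1) < \<theta> m"
  shows "promising \<theta> k m = {1..m}"
proof -
  have lt: "\<theta> i < \<theta> m" if "i \<in> {m<..k}" for i
    using antimono[of "m + 1" i] that gap by simp
  have ge: "\<theta> m \<le> \<theta> i" if "i \<in> {1..m}" for i
    using antimono[of i m] that \<open>m < k\<close> by simp
  have "i \<in> {1..m} \<longleftrightarrow> i \<in> {1..k} \<and> \<theta> m \<le> \<theta> i" for i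
  proof (cases "i \<le> m")
    case True
    then show ?thesis using ge[of i] \<open>m < k\<close> by auto
  next
    case False
    then show ?thesis using lt[of i] by auto
  qed
  then show ?thesis
    unfolding promising_def by blast
qed

lemma sets_Collect_ex_ge_1:
  fixes P :: "nat \<Rightarrow> 'a \<Rightarrow> bool"
  assumes "\<And>T. 1 \<le> T \<Longrightarrow> Measurable.pred M (P T)"
  shows "{\<omega> \<in> space M. \<exists>T\<ge>1. P T \<omega>} \<in> sets M"
proof -
  have "{\<omega> \<in> space M. \<exists>T\<ge>1. P T \<omega>} = {\<omega> \<in> space M. \<exists>T\<in>{1..}. P T \<omega>}"
    by auto
  also have "\<dots> \<in> sets M"
    using assms by (intro sets.sets_Collect_countable_Ex') (auto simp: pred_def)
  finally show ?thesis .
qed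

lemma ereal_bounds_of_abs_diff_le:
  "\<not> ereal \<epsilon> < \<bar>x - ereal c\<bar> \<Longrightarrow> ereal (c - \<epsilon>) \<le> x \<and> x \<le> ereal (c + \<epsilon>)"
  by (cases x) auto

definition deviation_event :: "'a measure \<Rightarrow> (nat \<Rightarrow> 'a \<Rightarrow> ereal) \<Rightarrow> real \<Rightarrow> real \<Rightarrow> nat \<Rightarrow> 'a set"
  where "deviation_event M X c \<epsilon> T = {\<omega> \<in> space M. ereal \<epsilon> < \<bar>X T \<omega> - ereal c\<bar>}"

definition converges_in_prob :: "'a measure \<Rightarrow> (nat \<Rightarrow> 'a \<Rightarrow> ereal) \<Rightarrow> real \<Rightarrow> bool" where
  "converges_in_prob M X c \<longleftrightarrow> (\<forall>\<epsilon>>0. (\<lambda>T. measure M (deviation_event M X c \<epsilon> T)) \<longlonglongrightarrow> 0)"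

locale scs_screening = prob_space M
  for M :: "'a measure" +
  fixes L U :: "nat \<Rightarrow> real \<Rightarrow> nat \<Rightarrow> 'a \<Rightarrow> ereal"
    and \<theta> :: "nat \<Rightarrow> real" and k m :: nat and \<alpha> :: real
  assumes m_pos: "1 \<le> m" and m_less: "m < k" and \<alpha>_nonneg: "0 \<le> \<alpha>"
    and \<theta>_antimono: "\<And>i j. 1 \<le> i \<Longrightarrow> i \<le> j \<Longrightarrow> j \<le> k \<Longrightarrow> \<theta> j \<le> \<theta> i"
    and L_measurable: "\<And>i T. i \<in> {1..k} \<Longrightarrow> 1 \<le> T \<Longrightarrow>
                         L i (alpha_km \<alpha> k m) T \<in> borel_measurable M"
    and U_measurable: "\<And>i T. i \<in> {1..k} \<Longrightarrow> 1 \<le> T \<Longrightarrow>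
                         U i (alpha_km \<alpha> k m) T \<in> borel_measurable M"
    and L_le_U: "\<And>i T \<omega>. i \<in> {1..k} \<Longrightarrow> 1 \<le> T \<Longrightarrow> \<omega> \<in> space M \<Longrightarrow>
                   L i (alpha_km \<alpha> k m) T \<omega> \<le> U i (alpha_km \<alpha> k m) T \<omega>"
    and L_coverage: "\<And>i. i \<in> {1..k} \<Longrightarrow>
          prob {\<omega> \<in> space M. \<exists>T\<ge>1. ereal (\<theta> i) \<le> L i (alpha_km \<alpha> k m) T \<omega>} \<le> alpha_km \<alpha> k m"
    and U_coverage: "\<And>i. i \<in> {1..k} \<Longrightarrow>
          prob {\<omega> \<in> space M. \<exists>T\<ge>1. U i (alpha_km \<alpha> k m) T \<omega> \<le> ereal (\<theta> i)} \<le> alpha_km \<alpha> k m"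
begin

abbreviation \<alpha>\<^sub>k\<^sub>m :: real where "\<alpha>\<^sub>k\<^sub>m \<equiv> alpha_km \<alpha> k m"

abbreviation screen :: "'a \<Rightarrow> nat \<Rightarrow> nat set" where "screen \<equiv> scs L U \<alpha> k m"

lemma screen_Suc_eq:
  assumes "\<omega> \<in> space M"
  shows "screen \<omega> (Suc T) = {i \<in> {1..k}. i \<in> screen \<omega> T \<and>
           card {j \<in> {1..k}. j \<in> screen \<omega> T \<and> U i \<alpha>\<^sub>k\<^sub>m (Suc T) \<omega> < L j \<alpha>\<^sub>k\<^sub>m (Suc T) \<omega>} < m}"
proof -
  have "{j \<in> screen \<omega> T. P j} = {j \<in> {1..k}. j \<in> screen \<omega> T \<and> P j}" for P
    using scs_subset[of L U \<alpha> k m \<omega> T] by blast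
  moreover have "i \<in> screen \<omega> (Suc T) \<longleftrightarrow> i \<in> screen \<omega> T \<and>
      card {j \<in> screen \<omega> T. U i \<alpha>\<^sub>k\<^sub>m (Suc T) \<omega> < L j \<alpha>\<^sub>k\<^sub>m (Suc T) \<omega>} < m" for i
    using m_pos m_less L_le_U[OF _ _ assms] by (intro mem_scs_Suc_iff) auto
  ultimately show ?thesis
    using scs_subset[of L U \<alpha> k m \<omega> T] by auto
qed

lemma measurable_screen: "(\<lambda>\<omega>. screen \<omega> T) \<in> M \<rightarrow>\<^sub>M count_space (Pow {1..k})"
proof (induction T)
  case 0
  then show ?case by simp
next
  case (Suc T)
  have mem_pred [measurable]: "Measurable.pred M (\<lambda>\<omega>. j \<in> screen \<omega> T)" for j
    using measurable_compose[OF Suc, of "\<lambda>S. j \<in> S"] by simp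
  have "Measurable.pred M (\<lambda>\<omega>. i \<in> screen \<omega> T \<and>
          card {j \<in> {1..k}. j \<in> screen \<omega> T \<and> U i \<alpha>\<^sub>k\<^sub>m (Suc T) \<omega> < L j \<alpha>\<^sub>k\<^sub>m (Suc T) \<omega>} < m)"
    if i: "i \<in> {1..k}" for i
  proof -
    have "Measurable.pred M (\<lambda>\<omega>. j \<in> screen \<omega> T \<and> U i \<alpha>\<^sub>k\<^sub>m (Suc T) \<omega> < L j \<alpha>\<^sub>k\<^sub>m (Suc T) \<omega>)"
      if j: "j \<in> {1..k}" for j
    proof -
      have [measurable]: "U i \<alpha>\<^sub>k\<^sub>m (Suc T) \<in> borel_measurable M" "L j \<alpha>\<^sub>k\<^sub>m (Suc T) \<in> borel_measurable M"
        using i j by (simp_all add: L_measurable U_measurable)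
      show ?thesis
        by measurable
    qed
    then have "(\<lambda>\<omega>. {j \<in> {1..k}. j \<in> screen \<omega> T \<and> U i \<alpha>\<^sub>k\<^sub>m (Suc T) \<omega> < L j \<alpha>\<^sub>k\<^sub>m (Suc T) \<omega>})
                 \<in> M \<rightarrow>\<^sub>M count_space (Pow {1..k})"
      by (intro measurable_Collect_finite) simp_all
    then have "Measurable.pred M (\<lambda>\<omega>.
                 card {j \<in> {1..k}. j \<in> screen \<omega> T \<and> U i \<alpha>\<^sub>k\<^sub>m (Suc T) \<omega> < L j \<alpha>\<^sub>k\<^sub>m (Suc T) \<omega>} < m)"
      by (rule measurable_compose[where g = "\<lambda>S. card S < m"]) simp
    with mem_pred show ?thesis
      by (rule pred_intros_logic(3))
  qed
  then have "(\<lambda>\<omega>. {i \<in> {1..k}. i \<in> screen \<omega> T \<and>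
          card {j \<in> {1..k}. j \<in> screen \<omega> T \<and> U i \<alpha>\<^sub>k\<^sub>m (Suc T) \<omega> < L j \<alpha>\<^sub>k\<^sub>m (Suc T) \<omega>} < m})
        \<in> M \<rightarrow>\<^sub>M count_space (Pow {1..k})"
    by (rule measurable_Collect_finite[OF finite_atLeastAtMost])
  then show ?case
    by (subst measurable_cong[OF screen_Suc_eq]) auto
qed

lemma pred_screen: "Measurable.pred M (\<lambda>\<omega>. Q (screen \<omega> T))"
  using measurable_compose[OF measurable_screen, of "\<lambda>S. Q S"] by simp

definition miss_event :: "nat \<Rightarrow> 'a set" where
  "miss_event i =
     (if i \<le> m then {\<omega> \<in> space M. \<exists>T\<ge>1. U i \<alpha>\<^sub>k\<^sub>m T \<omega> \<le> ereal (\<theta> i)}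
      else {\<omega> \<in> space M. \<exists>T\<ge>1. ereal (\<theta> i) \<le> L i \<alpha>\<^sub>k\<^sub>m T \<omega>})"

definition good_event :: "'a set" where
  "good_event = space M - (\<Union>i\<in>{1..k}. miss_event i)"

lemma sets_miss_event:
  assumes "i \<in> {1..k}"
  shows "miss_event i \<in> events"
proof -
  have "Measurable.pred M (\<lambda>\<omega>. U i \<alpha>\<^sub>k\<^sub>m T \<omega> \<le> ereal (\<theta> i))"
    and "Measurable.pred M (\<lambda>\<omega>. ereal (\<theta> i) \<le> L i \<alpha>\<^sub>k\<^sub>m T \<omega>)" if "1 \<le> T" for T
  proof -
    have [measurable]: "L i \<alpha>\<^sub>k\<^sub>m T \<in> borel_measurable M" "U i \<alpha>\<^sub>k\<^sub>m T \<in> borel_measurable M"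
      using L_measurable[OF assms that] U_measurable[OF assms that] by auto
    show "Measurable.pred M (\<lambda>\<omega>. U i \<alpha>\<^sub>k\<^sub>m T \<omega> \<le> ereal (\<theta> i))"
      by measurable
    show "Measurable.pred M (\<lambda>\<omega>. ereal (\<theta> i) \<le> L i \<alpha>\<^sub>k\<^sub>m T \<omega>)"
      by measurable
  qed
  then show ?thesis
    unfolding miss_event_def by (simp add: sets_Collect_ex_ge_1)
qed

lemma sets_miss_events: "(\<Union>i\<in>{1..k}. miss_event i) \<in> events"
  using sets_miss_event by (intro sets.finite_UN) auto

lemma sets_good_event: "good_event \<in> events"
  unfolding good_event_def using sets_miss_events by blast

lemma prob_good_event: "1 - \<alpha> \<le> prob good_event"
proof -
  have "prob (\<Union>i\<in>{1..k}. miss_event i) \<le> (\<Sum>i\<in>{1..k}. prob (miss_event i))"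
    using sets_miss_event by (intro finite_measure_subadditive_finite) auto
  also have "\<dots> \<le> (\<Sum>i\<in>{1..k}. \<alpha>\<^sub>k\<^sub>m)"
    using L_coverage U_coverage by (intro sum_mono) (simp add: miss_event_def)
  also have "\<dots> \<le> \<alpha>"
    using of_nat_mult_alpha_km_le[OF \<alpha>_nonneg m_pos m_less] by simp
  finally have "prob (\<Union>i\<in>{1..k}. miss_event i) \<le> \<alpha>" .
  moreover have "prob good_event = 1 - prob (\<Union>i\<in>{1..k}. miss_event i)"
    unfolding good_event_def by (rule prob_compl[OF sets_miss_events])
  ultimately show ?thesis
    by linarith
qed

lemma good_event_U_gt:
  assumes "\<omega> \<in> good_event" "i \<in> {1..m}" "1 \<le> T"
  shows "ereal (\<theta> i) < U i \<alpha>\<^sub>k\<^sub>m T \<omega>"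
proof -
  have "miss_event i = {\<omega> \<in> space M. \<exists>T\<ge>1. U i \<alpha>\<^sub>k\<^sub>m T \<omega> \<le> ereal (\<theta> i)}"
    using assms(2) by (simp add: miss_event_def)
  moreover have "\<omega> \<in> space M - miss_event i"
    using assms(1,2) m_less unfolding good_event_def by auto
  ultimately have "\<not> (\<exists>T\<ge>1. U i \<alpha>\<^sub>k\<^sub>m T \<omega> \<le> ereal (\<theta> i))"
    by blast
  then show ?thesis
    using assms(3) not_le by blast
qed

lemma good_event_L_lt:
  assumes "\<omega> \<in> good_event" "j \<in> {m<..k}" "1 \<le> T"
  shows "L j \<alpha>\<^sub>k\<^sub>m T \<omega> < ereal (\<theta> j)"
proof -
  have "miss_event j = {\<omega> \<in> space M. \<exists>T\<ge>1. ereal (\<theta> j) \<le> L j \<alpha>\<^sub>k\<^sub>m T \<omega>}"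
    using assms(2) by (simp add: miss_event_def)
  moreover have "\<omega> \<in> space M - miss_event j"
    using assms(1,2) m_pos unfolding good_event_def by auto
  ultimately have "\<not> (\<exists>T\<ge>1. ereal (\<theta> j) \<le> L j \<alpha>\<^sub>k\<^sub>m T \<omega>)"
    by blast
  then show ?thesis
    using assms(3) not_le by blast
qed

lemma top_subset_screen:
  assumes "\<omega> \<in> good_event"
  shows "{1..m} \<subseteq> screen \<omega> T"
proof (rule top_subset_scs[where c = "ereal (\<theta> m)"])
  show "\<theta> m \<le> U i \<alpha>\<^sub>k\<^sub>m T \<omega>" if "i \<in> {1..m}" "1 \<le> T" for i T
  proof -
    have "ereal (\<theta> m) \<le> ereal (\<theta> i)"
      using \<theta>_antimono[of i m] that m_less by simp
    then show ?thesis
      using good_event_U_gt[OF assms that] by (meson less_imp_le order.trans)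
  qed
  show "L j \<alpha>\<^sub>k\<^sub>m T \<omega> \<le> \<theta> m" if "j \<in> {m<..k}" "1 \<le> T" for j T
  proof -
    have "ereal (\<theta> j) \<le> ereal (\<theta> m)"
      using \<theta>_antimono[of m j] that m_pos by simp
    then show ?thesis
      using good_event_L_lt[OF assms that] by (meson less_imp_le order.trans)
  qed
  show "L i \<alpha>\<^sub>k\<^sub>m T \<omega> \<le> U i \<alpha>\<^sub>k\<^sub>m T \<omega>" if "i \<in> {1..k}" "1 \<le> T" for i T
    using L_le_U that assms sets.sets_into_space[OF sets_good_event] by blast
qed (use m_pos m_less in auto)

lemma prob_top_always_screened: "1 - \<alpha> \<le> prob {\<omega> \<in> space M. \<forall>T\<ge>1. {1..m} \<subseteq> screen \<omega> T}"
proof -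
  have "Measurable.pred M (\<lambda>\<omega>. \<forall>T\<ge>1. {1..m} \<subseteq> screen \<omega> T)"
    by (intro pred_intros_countable pred_intros_logic(4) measurable_const pred_screen) simp
  moreover have "good_event \<subseteq> {\<omega> \<in> space M. \<forall>T\<ge>1. {1..m} \<subseteq> screen \<omega> T}"
    using top_subset_screen sets.sets_into_space[OF sets_good_event] by blast
  ultimately have "prob good_event \<le> prob {\<omega> \<in> space M. \<forall>T\<ge>1. {1..m} \<subseteq> screen \<omega> T}"
    unfolding pred_def by (intro finite_measure_mono)
  then show ?thesis
    using prob_good_event by linarith
qed

lemma sets_deviation_event:
  assumes "i \<in> {1..k}" "1 \<le> T"
  shows "deviation_event M (L i \<alpha>\<^sub>k\<^sub>m) c \<epsilon> T \<in> events"
    and "deviation_event M (U i \<alpha>\<^sub>k\<^sub>m) c \<epsilon> T \<in> events"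
proof -
  have [measurable]: "L i \<alpha>\<^sub>k\<^sub>m T \<in> borel_measurable M" "U i \<alpha>\<^sub>k\<^sub>m T \<in> borel_measurable M"
    using L_measurable[OF assms] U_measurable[OF assms] by auto
  show "deviation_event M (L i \<alpha>\<^sub>k\<^sub>m) c \<epsilon> T \<in> events"
    unfolding deviation_event_def by measurable
  show "deviation_event M (U i \<alpha>\<^sub>k\<^sub>m) c \<epsilon> T \<in> events"
    unfolding deviation_event_def by measurable
qed

lemma not_mem_screen_Suc_if_accurate:
  assumes gap: "2 * \<epsilon> < \<theta> m - \<theta> (m + 1)"
    and \<omega>: "\<omega> \<in> good_event" and j: "j \<in> {m<..k}"
    and U_near: "\<omega> \<notin> deviation_event M (U j \<alpha>\<^sub>k\<^sub>m) (\<theta> j) \<epsilon> (Suc T)"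
    and L_near: "\<And>i. i \<in> {1..m} \<Longrightarrow> \<omega> \<notin> deviation_event M (L i \<alpha>\<^sub>k\<^sub>m) (\<theta> i) \<epsilon> (Suc T)"
  shows "j \<notin> screen \<omega> (Suc T)"
proof -
  have \<omega>_space: "\<omega> \<in> space M"
    using \<omega> sets.sets_into_space[OF sets_good_event] by blast
  have "U j \<alpha>\<^sub>k\<^sub>m (Suc T) \<omega> < L i \<alpha>\<^sub>k\<^sub>m (Suc T) \<omega>" if i: "i \<in> {1..m}" for i
  proof -
    have "\<theta> j \<le> \<theta> (m + 1)" "\<theta> m \<le> \<theta> i"
      using \<theta>_antimono j i m_less by auto
    then have "ereal (\<theta> j + \<epsilon>) < ereal (\<theta> i - \<epsilon>)"
      using gap by simp
    moreover have "U j \<alpha>\<^sub>k\<^sub>m (Suc T) \<omega> \<le> ereal (\<theta> j + \<epsilon>)" "ereal (\<theta> i - \<epsilon>) \<le> L i \<alpha>\<^sub>k\<^sub>m (Suc T) \<omega>"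
      using ereal_bounds_of_abs_diff_le U_near L_near[OF i] \<omega>_space
      unfolding deviation_event_def by blast+
    ultimately show ?thesis
      by (meson le_less_trans less_le_trans)
  qed
  then show ?thesis
    using L_le_U[OF _ _ \<omega>_space] m_pos m_less top_subset_screen[OF \<omega>, of T]
    by (intro not_mem_scs_Suc_if_dominated[where A = "{1..m}"]) auto
qed

lemma prob_never_dropped_eq_0:
  assumes gap: "\<theta> (m + 1) < \<theta> m" and j: "j \<in> {m<..k}"
    and conv_U: "converges_in_prob M (U j \<alpha>\<^sub>k\<^sub>m) (\<theta> j)"
    and conv_L: "\<And>i. i \<in> {1..m} \<Longrightarrow> converges_in_prob M (L i \<alpha>\<^sub>k\<^sub>m) (\<theta> i)"
  shows "prob {\<omega> \<in> good_event. \<forall>T. j \<in> screen \<omega> T} = 0"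
proof -
  define \<epsilon> where "\<epsilon> = (\<theta> m - \<theta> (m + 1)) / 3"
  define D_U where "D_U T = deviation_event M (U j \<alpha>\<^sub>k\<^sub>m) (\<theta> j) \<epsilon> (Suc T)" for T
  define D_L where "D_L i T = deviation_event M (L i \<alpha>\<^sub>k\<^sub>m) (\<theta> i) \<epsilon> (Suc T)" for i T
  let ?N = "{\<omega> \<in> good_event. \<forall>T. j \<in> screen \<omega> T}"
  have \<epsilon>: "0 < \<epsilon>" "2 * \<epsilon> < \<theta> m - \<theta> (m + 1)"
    using gap by (simp_all add: \<epsilon>_def)
  have sets_D: "D_U T \<in> events" "i \<in> {1..m} \<Longrightarrow> D_L i T \<in> events" for i T
    using j m_less unfolding D_U_def D_L_def by (auto intro: sets_deviation_event)
  have "prob ?N \<le> prob (D_U T) + (\<Sum>i\<in>{1..m}. prob (D_L i T))" for T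
  proof -
    have "?N \<subseteq> D_U T \<union> (\<Union>i\<in>{1..m}. D_L i T)"
      using not_mem_screen_Suc_if_accurate[OF \<epsilon>(2) _ j] unfolding D_U_def D_L_def by blast
    then have "prob ?N \<le> prob (D_U T \<union> (\<Union>i\<in>{1..m}. D_L i T))"
      using sets_D by (intro finite_measure_mono) auto
    also have "\<dots> \<le> prob (D_U T) + prob (\<Union>i\<in>{1..m}. D_L i T)"
      using sets_D by (intro measure_subadditive sets.finite_UN) auto
    also have "\<dots> \<le> prob (D_U T) + (\<Sum>i\<in>{1..m}. prob (D_L i T))"
      using sets_D by (intro add_left_mono finite_measure_subadditive_finite) auto
    finally show ?thesis .
  qed
  moreover have "(\<lambda>T. prob (D_U T) + (\<Sum>i\<in>{1..m}. prob (D_L i T))) \<longlonglongrightarrow> 0"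
    using conv_U conv_L \<epsilon>(1) unfolding D_U_def D_L_def converges_in_prob_def
    by (intro tendsto_add_zero tendsto_null_sum LIMSEQ_Suc) auto
  ultimately have "prob ?N \<le> 0"
    by (intro LIMSEQ_le_const) auto
  then show ?thesis
    using measure_nonneg[of M ?N] by linarith
qed

lemma sets_never_dropped: "{\<omega> \<in> good_event. \<forall>T. j \<in> screen \<omega> T} \<in> events"
proof -
  have "Measurable.pred M (\<lambda>\<omega>. \<forall>T. j \<in> screen \<omega> T)"
    by (intro pred_intros_countable pred_screen)
  then have "{\<omega> \<in> space M. \<forall>T. j \<in> screen \<omega> T} \<inter> good_event \<in> events"
    using sets_good_event unfolding pred_def by blast
  moreover have "{\<omega> \<in> space M. \<forall>T. j \<in> screen \<omega> T} \<inter> good_event = {\<omega> \<in> good_event. \<forall>T. j \<in> screen \<omega> T}"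
    using sets.sets_into_space[OF sets_good_event] by blast
  ultimately show ?thesis
    by simp
qed

lemma sets_eventually_screen_eq: "{\<omega> \<in> space M. \<exists>T0\<ge>1. \<forall>T\<ge>T0. screen \<omega> T = A} \<in> events"
proof -
  have "Measurable.pred M (\<lambda>\<omega>. \<exists>T0\<ge>1. \<forall>T\<ge>T0. screen \<omega> T = A)"
  proof (rule pred_intros_countable(2))
    fix T0 :: nat
    have "Measurable.pred M (\<lambda>\<omega>. T0 \<le> T \<longrightarrow> screen \<omega> T = A)" for T
      using pred_screen[of "\<lambda>S. T0 \<le> T \<longrightarrow> S = A" T] .
    then have "Measurable.pred M (\<lambda>\<omega>. \<forall>T\<ge>T0. screen \<omega> T = A)"
      by (rule pred_intros_countable(1))
    moreover have "Measurable.pred M (\<lambda>\<omega>. 1 \<le> T0)"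
      by (rule measurable_const) simp
    ultimately show "Measurable.pred M (\<lambda>\<omega>. 1 \<le> T0 \<and> (\<forall>T\<ge>T0. screen \<omega> T = A))"
      by (rule pred_intros_logic(3)[rotated])
  qed
  then show ?thesis
    unfolding pred_def .
qed

lemma prob_eventually_top:
  assumes gap: "\<theta> (m + 1) < \<theta> m"
    and conv_U: "\<And>j. j \<in> {m<..k} \<Longrightarrow> converges_in_prob M (U j \<alpha>\<^sub>k\<^sub>m) (\<theta> j)"
    and conv_L: "\<And>i. i \<in> {1..m} \<Longrightarrow> converges_in_prob M (L i \<alpha>\<^sub>k\<^sub>m) (\<theta> i)"
  shows "1 - \<alpha> \<le> prob {\<omega> \<in> space M. \<exists>T0\<ge>1. \<forall>T\<ge>T0. screen \<omega> T = {1..m}}"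
proof -
  define X where "X = (\<Union>j\<in>{m<..k}. {\<omega> \<in> good_event. \<forall>T. j \<in> screen \<omega> T})"
  have sets_X: "X \<in> events"
    unfolding X_def using sets_never_dropped by (intro sets.finite_UN) auto
  have "prob X \<le> (\<Sum>j\<in>{m<..k}. prob {\<omega> \<in> good_event. \<forall>T. j \<in> screen \<omega> T})"
    unfolding X_def using sets_never_dropped by (intro finite_measure_subadditive_finite) auto
  also have "\<dots> = 0"
    using prob_never_dropped_eq_0[OF gap _ conv_U conv_L] by simp
  finally have "prob X = 0"
    using measure_nonneg[of M X] by linarith
  moreover have "X \<subseteq> good_event"
    unfolding X_def by blast
  ultimately have "prob good_event = prob (good_event - X)"
    using finite_measure_Diff[OF sets_good_event sets_X] by simp
  also have "\<dots> \<le> prob {\<omega> \<in> space M. \<exists>T0\<ge>1. \<forall>T\<ge>T0. screen \<omega> T = {1..m}}"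
  proof (rule finite_measure_mono[OF _ sets_eventually_screen_eq], rule subsetI)
    fix \<omega> assume \<omega>: "\<omega> \<in> good_event - X"
    have "\<exists>T. j \<notin> screen \<omega> T" if "j \<in> {1..k} - {1..m}" for j
    proof -
      have "j \<in> {m<..k}"
        using that by auto
      then show ?thesis
        using \<omega> unfolding X_def by blast
    qed
    moreover have "\<And>T. {1..m} \<subseteq> screen \<omega> T"
      using \<omega> top_subset_screen by blast
    ultimately have "\<exists>T0\<ge>1. \<forall>T\<ge>T0. screen \<omega> T = {1..m}"
      by (intro scs_eventually_eq)
    then show "\<omega> \<in> {\<omega> \<in> space M. \<exists>T0\<ge>1. \<forall>T\<ge>T0. screen \<omega> T = {1..m}}"
      using \<omega> sets.sets_into_space[OF sets_good_event] by blast
  qed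
  finally show ?thesis
    using prob_good_event by linarith
qed

end

theorem theorem1:
  fixes M :: "'a measure" and F :: "nat \<Rightarrow> 'a measure"
    and L U :: "nat \<Rightarrow> real \<Rightarrow> nat \<Rightarrow> 'a \<Rightarrow> ereal"
    and \<theta> :: "nat \<Rightarrow> real" and k m :: nat and \<alpha> :: real
  assumes P: "prob_space M"
    and filt_sub: "\<And>T. T \<ge> 1 \<Longrightarrow> subalgebra M (F T)"
    and filt_mono: "\<And>s T. 1 \<le> s \<Longrightarrow> s \<le> T \<Longrightarrow> sets (F s) \<subseteq> sets (F T)"
    and L_adapt: "\<And>i \<beta> T. i \<in> {1..k} \<Longrightarrow> 0 < \<beta> \<Longrightarrow> \<beta> < 1 \<Longrightarrow> T \<ge> 1 \<Longrightarrow>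
                    L i \<beta> T \<in> borel_measurable (F T)"
    and U_adapt: "\<And>i \<beta> T. i \<in> {1..k} \<Longrightarrow> 0 < \<beta> \<Longrightarrow> \<beta> < 1 \<Longrightarrow> T \<ge> 1 \<Longrightarrow>
                    U i \<beta> T \<in> borel_measurable (F T)"
    and LU: "\<And>i \<beta> T \<omega>. i \<in> {1..k} \<Longrightarrow> 0 < \<beta> \<Longrightarrow> \<beta> < 1 \<Longrightarrow> T \<ge> 1 \<Longrightarrow>
                    \<omega> \<in> space M \<Longrightarrow> L i \<beta> T \<omega> \<le> U i \<beta> T \<omega>"
    and L_cov: "\<And>i \<beta>. i \<in> {1..k} \<Longrightarrow> 0 < \<beta> \<Longrightarrow> \<beta> < 1 \<Longrightarrow>
                    measure M {\<omega> \<in> space M. \<exists>T\<ge>1. ereal (\<theta> i) \<le> L i \<beta> T \<omega>} \<le> \<beta>"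
    and U_cov: "\<And>i \<beta>. i \<in> {1..k} \<Longrightarrow> 0 < \<beta> \<Longrightarrow> \<beta> < 1 \<Longrightarrow>
                    measure M {\<omega> \<in> space M. \<exists>T\<ge>1. ereal (\<theta> i) \<ge> U i \<beta> T \<omega>} \<le> \<beta>"
    and k2: "k \<ge> 2" and m1: "1 \<le> m" and mk: "m \<le> k - 1"
    and \<alpha>0: "0 < \<alpha>" and \<alpha>1: "\<alpha> < 1"
    and \<theta>_sorted: "\<And>i j. 1 \<le> i \<Longrightarrow> i \<le> j \<Longrightarrow> j \<le> k \<Longrightarrow> \<theta> j \<le> \<theta> i"
  shows
    "measure M {\<omega> \<in> space M. \<forall>T\<ge>1. scs L U \<alpha> k m \<omega> T \<subseteq> scs L U \<alpha> k m \<omega> (T - 1)} = 1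
     \<and> (\<theta> m > \<theta> (m + 1) \<longrightarrow>
          measure M {\<omega> \<in> space M. \<forall>T\<ge>1. promising \<theta> k m \<subseteq> scs L U \<alpha> k m \<omega> T} \<ge> 1 - \<alpha>)
     \<and> ((\<theta> m > \<theta> (m + 1) \<and>
         (\<forall>i\<in>{1..k}. \<forall>\<beta>. 0 < \<beta> \<and> \<beta> < 1 \<longrightarrow> (\<forall>\<epsilon>>0.
            ((\<lambda>T. measure M {\<omega> \<in> space M. \<bar>U i \<beta> T \<omega> - ereal (\<theta> i)\<bar> > ereal \<epsilon>}) \<longlonglongrightarrow> 0) \<and>
            ((\<lambda>T. measure M {\<omega> \<in> space M. \<bar>L i \<beta> T \<omega> - ereal (\<theta> i)\<bar> > ereal \<epsilon>}) \<longlonglongrightarrow> 0))))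
        \<longrightarrow> measure M {\<omega> \<in> space M. \<exists>T0\<ge>1. \<forall>T\<ge>T0. scs L U \<alpha> k m \<omega> T = promising \<theta> k m}
              \<ge> 1 - \<alpha>)"
proof -
  have m_less: "m < k"
    using k2 mk by linarith
  have \<alpha>_km: "0 < alpha_km \<alpha> k m" "alpha_km \<alpha> k m < 1"
    using alpha_km_pos[OF \<alpha>0 m1 m_less] alpha_km_less_one[OF \<alpha>0 \<alpha>1 m1 m_less] .
  \<comment> \<open>Adaptedness is only needed for measurability with respect to \<open>M\<close>.\<close>
  interpret scs_screening M L U \<theta> k m \<alpha>
  proof (rule scs_screening.intro[OF P], unfold_locales)
    fix i and T :: nat assume i: "i \<in> {1..k}" and T: "1 \<le> T"
    show "L i (alpha_km \<alpha> k m) T \<in> borel_measurable M"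
      by (rule measurable_from_subalg[OF filt_sub L_adapt]) (use i T \<alpha>_km in auto)
    show "U i (alpha_km \<alpha> k m) T \<in> borel_measurable M"
      by (rule measurable_from_subalg[OF filt_sub U_adapt]) (use i T \<alpha>_km in auto)
    show "L i (alpha_km \<alpha> k m) T \<omega> \<le> U i (alpha_km \<alpha> k m) T \<omega>" if "\<omega> \<in> space M" for \<omega>
      using LU[OF i \<alpha>_km T that] .
  qed (use m1 m_less \<alpha>0 \<theta>_sorted L_cov U_cov \<alpha>_km in auto)
  show ?thesis (is "?part_a \<and> (?gap \<longrightarrow> ?part_b) \<and> (?gap \<and> ?consistent \<longrightarrow> ?part_c)")
  proof (intro conjI impI)
    have "{\<omega> \<in> space M. \<forall>T\<ge>1. screen \<omega> T \<subseteq> screen \<omega> (T - 1)} = space M"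
      using scs_antimono[of "_ - 1" _ L U \<alpha> k m] by auto
    then show ?part_a
      by (simp add: prob_space)
  next
    assume ?gap
    then show ?part_b
      using prob_top_always_screened promising_eq_top[OF \<theta>_sorted m_less] by simp
  next
    assume "?gap \<and> ?consistent"
    then have "1 - \<alpha> \<le> prob {\<omega> \<in> space M. \<exists>T0\<ge>1. \<forall>T\<ge>T0. screen \<omega> T = {1..m}}"
      using m_less \<alpha>_km
      by (intro prob_eventually_top) (auto simp: converges_in_prob_def deviation_event_def)
    then show ?part_c
      using \<open>?gap \<and> ?consistent\<close> promising_eq_top[OF \<theta>_sorted m_less] by simp
  qed
qed

end
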